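(* Consider any instance of the large-market envy-free pricing problem described in the context with monotone hazard rate inverse demands and uniform peak $\lambda_i(0)=\lambda^{max}$, and a run of the ascending-price procedure with some stop parameter $k\ge1$. If an item $t$ belongs to the active set at two active prices $p_1<p_2$, then $c_t(y_t(p_1))\ge c_t(y_t(p_2))$, where $y_t(p)$ denotes the allocation of $t$ when the active price is $p$.
   Context: Model. Finite item set $S$, finite set $B$ of buyer types, bipartite graph $G=(B\cup S,E)$, $S_i=\{t:(i,t)\in E\}$. Buyer type $i$ has inverse demand $\lambda_i:[0,T_i]\to\mathbb{R}_{\ge0}$, non-increasing, continuously differentiable on $(0,T_i)$, with monotone hazard rate ($\lambda_i'/\lambda_i$ non-increasing), $\lambda_i(0)=\lambda^{max}$. Item $t$ has convex continuously differentiable production cost $C_t$ with derivative $c_t$. Allocations $y_t(i)\ge0$ ($>0$ only if $(i,t)\in E$), $\sum_ty_t(i)=x_i$, $y_t=\sum_iy_t(i)$. Best-response demand of type $i$ at price $q$: $\lambda_i(x_i)=q$. Min-cost flow for demand $\vec x$: feasible allocation minimizing $\sum_tC_t(y_t)$. $(\vec x^*,\vec y^* )$ a welfare maximizer (of $\sum_i\int_0^{x_i}\lambda_i-\sum_tC_t(y_t)$), $p^*_t=c_t(y^*_t)$. Ascending-price procedure with parameter $k\ge1$: start with $p_t=p^*_t$; ACTIVE = minimum-price items of $\vec p^*$ and buyer types receiving them in $\vec y^*$, rest INACTIVE, FINISH empty. Active items share an active price increased continuously; at active price $p$ active buyer types have best-response demand to $p$ and receive a min-cost flow within the subinstance induced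 by the active set; inactive entities keep their $\vec x^*,\vec y^*$ values, finished ones keep their values at finishing; $\vec y(p)$ is the resulting allocation. An inactive item $t$ (with the buyer types using it) becomes active when the active price reaches $p^*_t$. An active item $t$ (with buyer types using it) is finished and its price frozen once $p-c_t(y_t(p))\ge\frac1k(\lambda^{max}-c_t(y_t(p)))$. Ends when all are finished. *)

theory Defs
  imports "HOL-Analysis.Analysis"
begin

text \<open>Allocations are functions y :: item \<Rightarrow> buyer \<Rightarrow> real, y t i = y_t(i).\<close>

definition feasible_alloc ::
  "('b \<times> 's) set \<Rightarrow> 'b set \<Rightarrow> 's set \<Rightarrow> ('b \<Rightarrow> real) \<Rightarrow> ('s \<Rightarrow> 'b \<Rightarrow> real) \<Rightarrow> bool" where
  "feasible_alloc E B S x y \<longleftrightarrow>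
     (\<forall>t\<in>S. \<forall>i\<in>B. 0 \<le> y t i \<and> (0 < y t i \<longrightarrow> (i, t) \<in> E)) \<and>
     (\<forall>i\<in>B. (\<Sum>t\<in>S. y t i) = x i)"

definition load :: "'b set \<Rightarrow> ('s \<Rightarrow> 'b \<Rightarrow> real) \<Rightarrow> 's \<Rightarrow> real" where
  "load B y t = (\<Sum>i\<in>B. y t i)"

definition prod_cost ::
  "('s \<Rightarrow> real \<Rightarrow> real) \<Rightarrow> 'b set \<Rightarrow> 's set \<Rightarrow> ('s \<Rightarrow> 'b \<Rightarrow> real) \<Rightarrow> real" where
  "prod_cost C B S y = (\<Sum>t\<in>S. C t (load B y t))"

definition min_cost_flow ::
  "('b \<times> 's) set \<Rightarrow> ('s \<Rightarrow> real \<Rightarrow> real) \<Rightarrow> 'b set \<Rightarrow> 's set \<Rightarrow> ('b \<Rightarrow> real)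
     \<Rightarrow> ('s \<Rightarrow> 'b \<Rightarrow> real) \<Rightarrow> bool" where
  "min_cost_flow E C B S x y \<longleftrightarrow>
     feasible_alloc E B S x y \<and>
     (\<forall>y'. feasible_alloc E B S x y' \<longrightarrow> prod_cost C B S y \<le> prod_cost C B S y')"

definition welfare ::
  "('b \<Rightarrow> real \<Rightarrow> real) \<Rightarrow> ('s \<Rightarrow> real \<Rightarrow> real) \<Rightarrow> 'b set \<Rightarrow> 's set
     \<Rightarrow> ('b \<Rightarrow> real) \<Rightarrow> ('s \<Rightarrow> 'b \<Rightarrow> real) \<Rightarrow> real" where
  "welfare lam C B S x y = (\<Sum>i\<in>B. integral {0..x i} (lam i)) - prod_cost C B S y"

definition welfare_max ::
  "('b \<times> 's) set \<Rightarrow> ('b \<Rightarrow> real \<Rightarrow> real) \<Rightarrow> ('b \<Rightarrow> real) \<Rightarrow> ('s \<Rightarrow> real \<Rightarrow> real)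
     \<Rightarrow> 'b set \<Rightarrow> 's set \<Rightarrow> ('b \<Rightarrow> real) \<Rightarrow> ('s \<Rightarrow> 'b \<Rightarrow> real) \<Rightarrow> bool" where
  "welfare_max E lam T C B S x y \<longleftrightarrow>
     (\<forall>i\<in>B. 0 \<le> x i \<and> x i \<le> T i) \<and> feasible_alloc E B S x y \<and>
     (\<forall>x' y'. (\<forall>i\<in>B. 0 \<le> x' i \<and> x' i \<le> T i) \<and> feasible_alloc E B S x' y' \<longrightarrow>
        welfare lam C B S x' y' \<le> welfare lam C B S x y)"

definition best_response ::
  "('b \<Rightarrow> real \<Rightarrow> real) \<Rightarrow> ('b \<Rightarrow> real) \<Rightarrow> 'b \<Rightarrow> real \<Rightarrow> real \<Rightarrow> bool" where
  "best_response lam T i q x \<longleftrightarrow> 0 \<le> x \<and> x \<le> T i \<and> lam i x = q"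

text \<open>A run of the ascending-price procedure with parameter k, relative to the
  welfare-maximizing allocation ys (with prices p*_t = c_t(y*_t)).
  Run data: f t = price at which item t is finished (its price frozen);
  AS p / AB p = active items / active buyer types at active price p;
  xA p = demands of active buyer types; yA p = min-cost flow in the active subinstance.
  Convention: item t is active exactly for active prices p with p*_t \<le> p \<le> f t;
  at the finishing price the values are still computed with t active and then frozen.\<close>
definition ascending_run ::
  "('b \<times> 's) set \<Rightarrow> ('b \<Rightarrow> real \<Rightarrow> real) \<Rightarrow> ('b \<Rightarrow> real) \<Rightarrow> ('s \<Rightarrow> real \<Rightarrow> real)
    \<Rightarrow> ('s \<Rightarrow> real \<Rightarrow> real) \<Rightarrow> real \<Rightarrow> 'b set \<Rightarrow> 's set \<Rightarrow> ('s \<Rightarrow> 'b \<Rightarrow> real) \<Rightarrow> real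
    \<Rightarrow> ('s \<Rightarrow> real) \<Rightarrow> (real \<Rightarrow> 's set) \<Rightarrow> (real \<Rightarrow> 'b set) \<Rightarrow> (real \<Rightarrow> 'b \<Rightarrow> real)
    \<Rightarrow> (real \<Rightarrow> 's \<Rightarrow> 'b \<Rightarrow> real) \<Rightarrow> bool" where
  "ascending_run E lam T C c lmax B S ys k f AS AB xA yA \<longleftrightarrow>
    (let ps = (\<lambda>t. c t (load B ys t));
         p0 = Min (ps ` S);
         pend = Max (f ` S);
         finish_cond = (\<lambda>t p. p - c t (load (AB p) (yA p) t)
                                \<ge> (lmax - c t (load (AB p) (yA p) t)) / k)
     in (\<forall>t\<in>S. ps t \<le> f t) \<and>
        (\<forall>p. AS p = {t\<in>S. ps t \<le> p \<and> p \<le> f t}) \<and>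
        (\<forall>p. p0 \<le> p \<and> p \<le> pend \<longrightarrow>
            AB p = {i\<in>B. (\<exists>t\<in>S. 0 < ys t i \<and> ps t \<le> p) \<and>
                          \<not> (\<exists>t\<in>S. f t < p \<and> i \<in> AB (f t) \<and> 0 < yA (f t) t i)} \<and>
            (\<forall>i\<in>AB p. best_response lam T i p (xA p i)) \<and>
            min_cost_flow E C (AB p) (AS p) (xA p) (yA p)) \<and>
        (\<forall>t\<in>S. finish_cond t (f t) \<and> (\<forall>p. ps t \<le> p \<and> p < f t \<longrightarrow> \<not> finish_cond t p)))"

end

theory Submission
  imports Defs
begin

(* Chaining over the finitely many finishing prices, it suffices to compare two active
   prices p < q with no finishing price strictly between them. Suppose the marginal cost
   of t rises from p to q and let U be the set of items active at both prices whose
   marginal cost rises; by convexity their loads rise too. In a min-cost flow a buyer type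
   only uses items of least marginal cost among its neighbours. Hence a buyer type feeding
   U at q was already active at p (the welfare optimum sent it to an item at most as
   expensive as one in U) and at p it fed nothing but U; its demand at q is at most its
   demand at p because demand decreases in the price. So the total load on U does not
   rise, a contradiction. *)

lemma convex_on_above_tangent_right:
  fixes f :: "real \<Rightarrow> real"
  assumes convex: "convex_on A f" and sub: "{c..x} \<subseteq> A"
    and deriv: "(f has_real_derivative f') (at c within A)" and cx: "c < x"
  shows "f' * (x - c) \<le> f x - f c"
proof -
  have "(f has_real_derivative f') (at_right c)"
    using has_field_derivative_subset[OF deriv sub] by (simp add: at_within_Icc_at_right[OF cx])
  then have "((\<lambda>y. (f y - f c) / (y - c)) \<longlongrightarrow> f') (at_right c)"
    by (simp add: has_field_derivative_iff)
  moreover have "eventually (\<lambda>y. (f y - f c) / (y - c) \<le> (f x - f c) / (x - c)) (at_right c)"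
    using eventually_at_right_real[OF cx]
  proof eventually_elim
    fix y assume y: "y \<in> {c<..<x}"
    have "f y \<le> (f x - f c) / (x - c) * (y - c) + f c"
      using convex_onD_Icc'[OF convex_on_subset[OF convex sub], of y] y by auto
    then show "(f y - f c) / (y - c) \<le> (f x - f c) / (x - c)"
      using y by (simp add: field_split_simps)
  qed
  ultimately have "f' \<le> (f x - f c) / (x - c)"
    by (simp add: tendsto_upperbound)
  then show ?thesis using cx by (simp add: field_simps)
qed

lemma convex_on_Ici_above_tangent:
  fixes f :: "real \<Rightarrow> real"
  assumes convex: "convex_on {a..} f"
    and deriv: "\<And>y. a \<le> y \<Longrightarrow> (f has_real_derivative f' y) (at y within {a..})"
    and c: "a \<le> c" and x: "a \<le> x"
  shows "f' c * (x - c) \<le> f x - f c"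
proof (cases x c rule: linorder_cases)
  case less
  then have "c \<in> interior {a..}" using x by auto
  then show ?thesis
    using convex_on_imp_above_tangent[OF convex _ _ _ deriv[OF c]] x by (auto simp: connected_Ici)
next
  case greater
  then show ?thesis
    using convex_on_above_tangent_right[OF convex _ deriv[OF c]] c by auto
qed simp

lemma convex_on_Ici_deriv_mono:
  fixes f :: "real \<Rightarrow> real"
  assumes convex: "convex_on {a..} f"
    and deriv: "\<And>y. a \<le> y \<Longrightarrow> (f has_real_derivative f' y) (at y within {a..})"
    and x: "a \<le> x" and xy: "x \<le> y"
  shows "f' x \<le> f' y"
proof -
  have "f' x * (y - x) \<le> f y - f x" "f' y * (x - y) \<le> f x - f y"
    using convex_on_Ici_above_tangent[OF convex deriv] x xy by auto
  then have "0 \<le> (f' y - f' x) * (y - x)" by (simp add: algebra_simps)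
  then show ?thesis using xy by (cases "x = y") (auto simp: zero_le_mult_iff)
qed

lemma antimono_on_Icc_from_breakpoints:
  fixes g :: "real \<Rightarrow> 'a :: linorder"
  assumes "finite F"
    and "\<And>p q. a \<le> p \<Longrightarrow> p < q \<Longrightarrow> q \<le> b \<Longrightarrow> F \<inter> {p<..<q} = {} \<Longrightarrow> g q \<le> g p"
  shows "antimono_on {a..b} g"
  using assms
proof (induction F rule: finite_induct)
  case empty
  then show ?case by (force intro: monotone_onI simp: order.order_iff_strict)
next
  case (insert r F)
  show ?case
  proof (rule insert.IH)
    fix p q assume pq: "a \<le> p" "p < q" "q \<le> b" and F: "F \<inter> {p<..<q} = {}"
    show "g q \<le> g p"
    proof (cases "r \<in> {p<..<q}")
      case True
      then have "F \<inter> {p<..<r} = {}" "F \<inter> {r<..<q} = {}" using F by auto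
      then have "g r \<le> g p" "g q \<le> g r"
        using insert.prems[of p r] insert.prems[of r q] pq True by auto
      then show ?thesis by order
    next
      case False
      then show ?thesis using insert.prems pq F by auto
    qed
  qed
qed

lemma load_nonneg:
  assumes "feasible_alloc E B S x y" and "t \<in> S"
  shows "0 \<le> load B y t"
  using assms unfolding feasible_alloc_def load_def by (auto intro: sum_nonneg)

lemma welfare_max_imp_min_cost_flow:
  assumes "welfare_max E lam T C B S x y"
  shows "min_cost_flow E C B S x y"
  using assms unfolding welfare_max_def min_cost_flow_def welfare_def by force

definition reroute :: "('s \<Rightarrow> 'b \<Rightarrow> real) \<Rightarrow> 'b \<Rightarrow> 's \<Rightarrow> 's \<Rightarrow> real \<Rightarrow> 's \<Rightarrow> 'b \<Rightarrow> real" where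
  "reroute y i s r e =
     (\<lambda>u j. y u j + (if u = r \<and> j = i then e else 0) - (if u = s \<and> j = i then e else 0))"

lemma feasible_alloc_reroute:
  assumes "feasible_alloc E B S x y" and "finite S"
    and "s \<in> S" "r \<in> S" "s \<noteq> r" "(i, r) \<in> E" "0 \<le> e" "e \<le> y s i"
  shows "feasible_alloc E B S x (reroute y i s r e)"
proof -
  have "(\<Sum>u\<in>S. reroute y i s r e u j) = (\<Sum>u\<in>S. y u j)" for j
    using assms unfolding reroute_def
    by (cases "j = i") (simp_all add: sum.distrib sum_subtractf sum.delta)
  then show ?thesis
    using assms unfolding feasible_alloc_def reroute_def by (auto split: if_splits)
qed

lemma load_reroute:
  assumes "finite B" and "i \<in> B"
  shows "load B (reroute y i s r e) u =
           load B y u + (if u = r then e else 0) - (if u = s then e else 0)"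
  using assms unfolding reroute_def load_def by (simp add: sum.distrib sum_subtractf sum.delta)

lemma prod_cost_reroute:
  assumes "finite B" "finite S" "i \<in> B" "s \<in> S" "r \<in> S" "s \<noteq> r"
  shows "prod_cost C B S (reroute y i s r e) = prod_cost C B S y
           + (C s (load B y s - e) - C s (load B y s)) + (C r (load B y r + e) - C r (load B y r))"
proof -
  have "prod_cost C B S (reroute y i s r e) = (\<Sum>u\<in>S. C u (load B y u)
          + (if u = s then C s (load B y s - e) - C s (load B y s) else 0)
          + (if u = r then C r (load B y r + e) - C r (load B y r) else 0))"
    unfolding prod_cost_def load_reroute[OF assms(1,3)] using \<open>s \<noteq> r\<close> by (intro sum.cong) auto
  also have "\<dots> = prod_cost C B S y
          + (C s (load B y s - e) - C s (load B y s)) + (C r (load B y r + e) - C r (load B y r))"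
    unfolding prod_cost_def using assms by (simp add: sum.distrib sum.delta)
  finally show ?thesis .
qed

(* Rerouting e units of buyer i from s to r keeps the flow feasible, so optimality and the
   tangent inequalities give c s (Ls - e) \<le> c r (Lr + e); then let e tend to 0. *)
lemma min_cost_flow_marginal_cost_le:
  fixes C c :: "'s \<Rightarrow> real \<Rightarrow> real"
  assumes mcf: "min_cost_flow E C B S x y" and finB: "finite B" and finS: "finite S"
    and convex: "\<And>u. u \<in> S \<Longrightarrow> convex_on {0..} (C u)"
    and deriv: "\<And>u z. u \<in> S \<Longrightarrow> 0 \<le> z \<Longrightarrow> (C u has_real_derivative c u z) (at z within {0..})"
    and cont: "\<And>u. u \<in> S \<Longrightarrow> continuous_on {0..} (c u)"
    and s: "s \<in> S" and r: "r \<in> S" and i: "i \<in> B" and pos: "0 < y s i" and edge: "(i, r) \<in> E"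
  shows "c s (load B y s) \<le> c r (load B y r)"
proof (cases "s = r")
  case False
  define Ls Lr where "Ls = load B y s" and "Lr = load B y r"
  have feas: "feasible_alloc E B S x y" using mcf unfolding min_cost_flow_def by simp
  have Lr: "0 \<le> Lr" unfolding Lr_def by (rule load_nonneg[OF feas r])
  have Ls: "y s i \<le> Ls"
    unfolding Ls_def load_def using feas s i finB
    by (intro member_le_sum) (auto simp: feasible_alloc_def)
  have perturbed: "c s (Ls - e) \<le> c r (Lr + e)" if e: "0 < e" "e < y s i" for e
  proof -
    have "prod_cost C B S y \<le> prod_cost C B S (reroute y i s r e)"
      using mcf feasible_alloc_reroute[OF feas finS s r False edge] e
      unfolding min_cost_flow_def by auto
    then have "0 \<le> (C s (Ls - e) - C s Ls) + (C r (Lr + e) - C r Lr)"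
      unfolding prod_cost_reroute[OF finB finS i s r False] Ls_def Lr_def by simp
    moreover have "c s (Ls - e) * (Ls - (Ls - e)) \<le> C s Ls - C s (Ls - e)"
      using Ls e by (intro convex_on_Ici_above_tangent[OF convex[OF s] deriv[OF s]]) auto
    moreover have "c r (Lr + e) * (Lr - (Lr + e)) \<le> C r Lr - C r (Lr + e)"
      using Lr e by (intro convex_on_Ici_above_tangent[OF convex[OF r] deriv[OF r]]) auto
    ultimately have "e * (c s (Ls - e) - c r (Lr + e)) \<le> 0" by (simp add: algebra_simps)
    then show ?thesis using e by (simp add: mult_le_0_iff)
  qed
  have "((\<lambda>e. c r (Lr + e)) \<longlongrightarrow> c r Lr) (at_right 0)"
    by (rule continuous_on_tendsto_compose[OF cont[OF r]])
       (use Lr in \<open>auto intro!: tendsto_eq_intros eventually_at_rightI[of 0 1]\<close>)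
  moreover have "((\<lambda>e. c s (Ls - e)) \<longlongrightarrow> c s Ls) (at_right 0)"
  proof (rule continuous_on_tendsto_compose[OF cont[OF s]])
    show "((\<lambda>e. Ls - e) \<longlongrightarrow> Ls) (at_right 0)"
      by (auto intro!: tendsto_eq_intros)
    show "\<forall>\<^sub>F e in at_right 0. Ls - e \<in> {0..}"
      using eventually_at_right_real[OF pos] by eventually_elim (use Ls in auto)
  qed (use Ls pos in auto)
  moreover have "\<forall>\<^sub>F e in at_right 0. c s (Ls - e) \<le> c r (Lr + e)"
    using eventually_at_right_real[OF pos] by eventually_elim (use perturbed in auto)
  ultimately show ?thesis
    unfolding Ls_def Lr_def by (rule tendsto_le[OF trivial_limit_at_right_real])
qed simp

lemma sum_load_le_if_confined:
  assumes finB1: "finite B1" and finB2: "finite B2" and finS1: "finite S1" and finS2: "finite S2"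
    and U1: "U \<subseteq> S1" and U2: "U \<subseteq> S2"
    and feas1: "feasible_alloc E B1 S1 x1 y1" and feas2: "feasible_alloc E B2 S2 x2 y2"
    and confined: "\<And>i s. i \<in> B2 \<Longrightarrow> s \<in> U \<Longrightarrow> 0 < y2 s i \<Longrightarrow>
                          i \<in> B1 \<and> x2 i \<le> x1 i \<and> (\<forall>r\<in>S1 - U. y1 r i = 0)"
  shows "(\<Sum>s\<in>U. load B2 y2 s) \<le> (\<Sum>s\<in>U. load B1 y1 s)"
proof -
  have nonneg1: "\<And>s i. s \<in> S1 \<Longrightarrow> i \<in> B1 \<Longrightarrow> 0 \<le> y1 s i"
    and sum1: "\<And>i. i \<in> B1 \<Longrightarrow> (\<Sum>s\<in>S1. y1 s i) = x1 i"
    using feas1 unfolding feasible_alloc_def by auto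
  have nonneg2: "\<And>s i. s \<in> S2 \<Longrightarrow> i \<in> B2 \<Longrightarrow> 0 \<le> y2 s i"
    and sum2: "\<And>i. i \<in> B2 \<Longrightarrow> (\<Sum>s\<in>S2. y2 s i) = x2 i"
    using feas2 unfolding feasible_alloc_def by auto
  have buyer: "(\<Sum>s\<in>U. y2 s i) \<le> (if i \<in> B1 then \<Sum>s\<in>U. y1 s i else 0)" if i: "i \<in> B2" for i
  proof (cases "\<exists>s\<in>U. 0 < y2 s i")
    case False
    then have "(\<Sum>s\<in>U. y2 s i) = 0"
      using nonneg2 i U2 by (intro sum.neutral) (force simp: not_less)
    then show ?thesis using nonneg1 U1 by (auto intro: sum_nonneg)
  next
    case True
    then obtain s where "s \<in> U" "0 < y2 s i" by blast
    with confined i have i1: "i \<in> B1" and x: "x2 i \<le> x1 i" and out: "\<forall>r\<in>S1 - U. y1 r i = 0"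
      by auto
    have "(\<Sum>s\<in>U. y2 s i) \<le> (\<Sum>s\<in>S2. y2 s i)"
      using nonneg2 i by (intro sum_mono2[OF finS2 U2]) auto
    also have "\<dots> \<le> (\<Sum>s\<in>S1. y1 s i)" using sum1 sum2 i i1 x by simp
    also have "\<dots> = (\<Sum>s\<in>U. y1 s i)"
      using out by (intro sum.mono_neutral_right[OF finS1 U1]) auto
    finally show ?thesis using i1 by simp
  qed
  have "(\<Sum>s\<in>U. load B2 y2 s) = (\<Sum>i\<in>B2. \<Sum>s\<in>U. y2 s i)"
    unfolding load_def by (rule sum.swap)
  also have "\<dots> \<le> (\<Sum>i\<in>B2. if i \<in> B1 then \<Sum>s\<in>U. y1 s i else 0)"
    using buyer by (rule sum_mono)
  also have "\<dots> = (\<Sum>i\<in>B2 \<inter> B1. \<Sum>s\<in>U. y1 s i)"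
    using finB2 by (simp add: sum.inter_restrict)
  also have "\<dots> \<le> (\<Sum>i\<in>B1. \<Sum>s\<in>U. y1 s i)"
    using nonneg1 U1 by (intro sum_mono2[OF finB1]) (auto intro: sum_nonneg)
  also have "\<dots> = (\<Sum>s\<in>U. load B1 y1 s)"
    unfolding load_def by (rule sum.swap)
  finally show ?thesis .
qed

lemma best_response_antimono:
  assumes "\<And>x y. 0 \<le> x \<Longrightarrow> x \<le> y \<Longrightarrow> y \<le> T i \<Longrightarrow> lam i y \<le> lam i x"
    and "best_response lam T i p xp" and "best_response lam T i q xq" and "p < q"
  shows "xq \<le> xp"
  using assms(1)[of xp xq] assms(2-4) unfolding best_response_def by force

locale ascending_price_run =
  fixes E :: "('b \<times> 's) set" and lam :: "'b \<Rightarrow> real \<Rightarrow> real" and T :: "'b \<Rightarrow> real"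
    and C c :: "'s \<Rightarrow> real \<Rightarrow> real" and lmax k :: real and B :: "'b set" and S :: "'s set"
    and xs :: "'b \<Rightarrow> real" and ys :: "'s \<Rightarrow> 'b \<Rightarrow> real"
    and f :: "'s \<Rightarrow> real" and AS :: "real \<Rightarrow> 's set" and AB :: "real \<Rightarrow> 'b set"
    and xA :: "real \<Rightarrow> 'b \<Rightarrow> real" and yA :: "real \<Rightarrow> 's \<Rightarrow> 'b \<Rightarrow> real"
  assumes finite_B: "finite B" and finite_S: "finite S"
    and lam_antimono: "\<And>i x y. i \<in> B \<Longrightarrow> 0 \<le> x \<Longrightarrow> x \<le> y \<Longrightarrow> y \<le> T i \<Longrightarrow> lam i y \<le> lam i x"
    and C_convex: "\<And>t. t \<in> S \<Longrightarrow> convex_on {0..} (C t)"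
    and C_deriv: "\<And>t y. t \<in> S \<Longrightarrow> 0 \<le> y \<Longrightarrow> (C t has_real_derivative c t y) (at y within {0..})"
    and c_cont: "\<And>t. t \<in> S \<Longrightarrow> continuous_on {0..} (c t)"
    and ys_min_cost: "min_cost_flow E C B S xs ys"
    and run: "ascending_run E lam T C c lmax B S ys k f AS AB xA yA"
begin

abbreviation pstar :: "'s \<Rightarrow> real" where
  "pstar t \<equiv> c t (load B ys t)"

abbreviation active_load :: "real \<Rightarrow> 's \<Rightarrow> real" where
  "active_load p t \<equiv> load (AB p) (yA p) t"

lemma active_items: "AS p = {t \<in> S. pstar t \<le> p \<and> p \<le> f t}"
  using run unfolding ascending_run_def Let_def by auto

lemma active_items_subset: "AS p \<subseteq> S"
  unfolding active_items by auto

lemma finite_active_items: "finite (AS p)"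
  using finite_subset[OF active_items_subset finite_S] .

lemma active_price_in_run_range:
  assumes "t \<in> AS p"
  shows "Min (pstar ` S) \<le> p \<and> p \<le> Max (f ` S)"
proof -
  have "t \<in> S" "pstar t \<le> p" "p \<le> f t" using assms unfolding active_items by auto
  then show ?thesis
    using finite_S by (auto intro: order.trans[OF Min_le] order.trans[OF _ Max_ge])
qed

lemma
  assumes "t \<in> AS p"
  shows active_buyers: "AB p = {i \<in> B. (\<exists>u\<in>S. 0 < ys u i \<and> pstar u \<le> p) \<and>
                                 \<not> (\<exists>u\<in>S. f u < p \<and> i \<in> AB (f u) \<and> 0 < yA (f u) u i)}"
    and best_response_active: "\<And>i. i \<in> AB p \<Longrightarrow> best_response lam T i p (xA p i)"
    and min_cost_flow_active: "min_cost_flow E C (AB p) (AS p) (xA p) (yA p)"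
  using run active_price_in_run_range[OF assms] unfolding ascending_run_def Let_def by auto

lemma feasible_active:
  assumes "t \<in> AS p"
  shows "feasible_alloc E (AB p) (AS p) (xA p) (yA p)"
  using min_cost_flow_active[OF assms] unfolding min_cost_flow_def by simp

lemma finite_active_buyers:
  assumes "t \<in> AS p"
  shows "finite (AB p)"
  using finite_subset[OF _ finite_B] active_buyers[OF assms] by auto

lemma pstar_le_of_edge:
  assumes "s \<in> S" "r \<in> S" "i \<in> B" "0 < ys s i" "(i, r) \<in> E"
  shows "pstar s \<le> pstar r"
  by (rule min_cost_flow_marginal_cost_le
        [OF ys_min_cost finite_B finite_S C_convex C_deriv c_cont assms])

lemma active_marginal_cost_le:
  assumes "s \<in> AS p" "r \<in> AS p" "i \<in> AB p" "0 < yA p s i" "(i, r) \<in> E"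
  shows "c s (active_load p s) \<le> c r (active_load p r)"
  using active_items_subset assms
  by (intro min_cost_flow_marginal_cost_le[OF min_cost_flow_active[OF assms(1)]
        finite_active_buyers[OF assms(1)] finite_active_items C_convex C_deriv c_cont]) auto

lemma active_load_less_if_marginal_cost_less:
  assumes "s \<in> AS p" "s \<in> AS q" "c s (active_load p s) < c s (active_load q s)"
  shows "active_load p s < active_load q s"
proof (rule ccontr)
  assume "\<not> ?thesis"
  moreover have "s \<in> S" using assms(1) active_items_subset by auto
  moreover have "0 \<le> active_load q s" using load_nonneg[OF feasible_active[OF assms(2)] assms(2)] .
  ultimately have "c s (active_load q s) \<le> c s (active_load p s)"
    by (intro convex_on_Ici_deriv_mono[OF C_convex C_deriv]) auto
  with assms(3) show False by simp
qed

lemma active_buyer_active_before: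
  assumes i: "i \<in> AB q" and s: "s \<in> AS p" "s \<in> AS q" and pos: "0 < yA q s i" and "p \<le> q"
  shows "i \<in> AB p"
proof -
  have iB: "i \<in> B"
    and origin: "\<exists>u\<in>S. 0 < ys u i \<and> pstar u \<le> q"
    and not_removed: "\<not> (\<exists>u\<in>S. f u < q \<and> i \<in> AB (f u) \<and> 0 < yA (f u) u i)"
    using i active_buyers[OF s(2)] by auto
  from origin obtain u where u: "u \<in> S" "0 < ys u i" by blast
  have "(i, s) \<in> E" using feasible_active[OF s(2)] s(2) i pos unfolding feasible_alloc_def by auto
  then have "pstar u \<le> pstar s" using pstar_le_of_edge u iB s(1) active_items by auto
  also have "pstar s \<le> p" using s(1) active_items by auto
  finally show ?thesis
    using active_buyers[OF s(1)] iB u not_removed \<open>p \<le> q\<close> by force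
qed

lemma marginal_cost_increase_spreads:
  assumes no_finish: "\<forall>u\<in>S. \<not> (p < f u \<and> f u < q)" and "p < q"
    and i: "i \<in> AB q" and s: "s \<in> AS p" "s \<in> AS q" and pos_q: "0 < yA q s i"
    and rising: "c s (active_load p s) < c s (active_load q s)"
    and r: "r \<in> AS p" and pos_p: "0 < yA p r i"
  shows "r \<in> AS q \<and> c r (active_load p r) < c r (active_load q r)"
proof -
  have iAp: "i \<in> AB p" using active_buyer_active_before[OF i s pos_q] \<open>p < q\<close> by simp
  have rq: "r \<in> AS q"
  proof (rule ccontr)
    assume "r \<notin> AS q"
    \<comment> \<open>then r finished exactly at p, which removed the buyer types it served\<close>
    then have "f r = p" using r no_finish \<open>p < q\<close> unfolding active_items by force
    then show False using i active_buyers[OF s(2)] r iAp pos_p \<open>p < q\<close> active_items by auto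
  qed
  have "(i, r) \<in> E" "(i, s) \<in> E"
    using feasible_active[OF r] feasible_active[OF rq] r rq s i iAp pos_p pos_q
    unfolding feasible_alloc_def by auto
  then have "c r (active_load p r) \<le> c s (active_load p s)"
    and "c s (active_load q s) \<le> c r (active_load q r)"
    using active_marginal_cost_le iAp i r rq s pos_p pos_q by auto
  with rising rq show ?thesis by simp
qed

lemma marginal_cost_step:
  assumes tp: "t \<in> AS p" and tq: "t \<in> AS q" and "p < q"
    and no_finish: "\<forall>u\<in>S. \<not> (p < f u \<and> f u < q)"
  shows "c t (active_load q t) \<le> c t (active_load p t)"
proof (rule ccontr)
  define U where "U = {s \<in> AS p \<inter> AS q. c s (active_load p s) < c s (active_load q s)}"
  assume "\<not> ?thesis"
  then have "t \<in> U" unfolding U_def using tp tq by simp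
  have "(\<Sum>s\<in>U. active_load q s) \<le> (\<Sum>s\<in>U. active_load p s)"
  proof (rule sum_load_le_if_confined[OF finite_active_buyers[OF tp] finite_active_buyers[OF tq]
        finite_active_items finite_active_items _ _ feasible_active[OF tp] feasible_active[OF tq]])
    fix i s assume i: "i \<in> AB q" and s: "s \<in> U" and pos: "0 < yA q s i"
    have sp: "s \<in> AS p" and sq: "s \<in> AS q" using s unfolding U_def by auto
    have ip: "i \<in> AB p" using active_buyer_active_before[OF i sp sq pos] \<open>p < q\<close> by simp
    have "xA q i \<le> xA p i"
      using best_response_antimono[OF lam_antimono best_response_active[OF tp ip]
          best_response_active[OF tq i] \<open>p < q\<close>] active_buyers[OF tp] ip by auto
    moreover have "yA p r i = 0" if r: "r \<in> AS p - U" for r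
      using marginal_cost_increase_spreads[OF no_finish \<open>p < q\<close> i sp sq pos] s r
        feasible_active[OF tp] ip unfolding U_def feasible_alloc_def by force
    ultimately show "i \<in> AB p \<and> xA q i \<le> xA p i \<and> (\<forall>r\<in>AS p - U. yA p r i = 0)"
      using ip by blast
  qed (auto simp: U_def)
  moreover have "(\<Sum>s\<in>U. active_load p s) < (\<Sum>s\<in>U. active_load q s)"
    using \<open>t \<in> U\<close> finite_subset[of U "AS p", OF _ finite_active_items]
    by (intro sum_strict_mono_ex1)
       (auto simp: U_def active_load_less_if_marginal_cost_less less_imp_le)
  ultimately show False by simp
qed

lemma marginal_cost_antimono:
  "antimono_on {pstar t..f t} (\<lambda>p. c t (active_load p t))" if "t \<in> S"
  using finite_S that
  by (intro antimono_on_Icc_from_breakpoints[of "f ` S"] marginal_cost_step)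
     (auto simp: active_items)

end

theorem lemma2:
  fixes E :: "('b \<times> 's) set" and B :: "'b set" and S :: "'s set"
    and lam :: "'b \<Rightarrow> real \<Rightarrow> real" and T :: "'b \<Rightarrow> real" and lmax :: real
    and C c :: "'s \<Rightarrow> real \<Rightarrow> real" and k :: real
    and xs :: "'b \<Rightarrow> real" and ys :: "'s \<Rightarrow> 'b \<Rightarrow> real"
    and f :: "'s \<Rightarrow> real" and AS :: "real \<Rightarrow> 's set" and AB :: "real \<Rightarrow> 'b set"
    and xA :: "real \<Rightarrow> 'b \<Rightarrow> real" and yA :: "real \<Rightarrow> 's \<Rightarrow> 'b \<Rightarrow> real"
    and t :: 's and p1 p2 :: real
  assumes finB: "finite B" and finS: "finite S" and neS: "S \<noteq> {}"
    and graph: "E \<subseteq> B \<times> S"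
    and lam_nonneg: "\<forall>i\<in>B. \<forall>x\<in>{0..T i}. 0 \<le> lam i x"
    and lam_mono: "\<forall>i\<in>B. \<forall>x y. 0 \<le> x \<and> x \<le> y \<and> y \<le> T i \<longrightarrow> lam i y \<le> lam i x"
    and lam_diff: "\<forall>i\<in>B. \<forall>x\<in>{0<..<T i}. lam i differentiable (at x)"
    and lam_C1: "\<forall>i\<in>B. continuous_on {0<..<T i} (deriv (lam i))"
    and lam_MHR: "\<forall>i\<in>B. \<forall>x y. 0 < x \<and> x \<le> y \<and> y < T i \<and> 0 < lam i x \<and> 0 < lam i y \<longrightarrow>
                    deriv (lam i) y / lam i y \<le> deriv (lam i) x / lam i x"
    and lam_peak: "\<forall>i\<in>B. lam i 0 = lmax"
    and C_convex: "\<forall>t\<in>S. convex_on {0..} (C t)"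
    and C_deriv: "\<forall>t\<in>S. \<forall>y\<ge>0. (C t has_real_derivative c t y) (at y within {0..})"
    and c_cont: "\<forall>t\<in>S. continuous_on {0..} (c t)"
    and k_ge: "1 \<le> k"
    and wmax: "welfare_max E lam T C B S xs ys"
    and run: "ascending_run E lam T C c lmax B S ys k f AS AB xA yA"
    and tS: "t \<in> S"
    and p12: "p1 < p2"
    and act1: "t \<in> AS p1" and act2: "t \<in> AS p2"
  shows "c t (load (AB p1) (yA p1) t) \<ge> c t (load (AB p2) (yA p2) t)"
proof -
  interpret ascending_price_run E lam T C c lmax k B S xs ys f AS AB xA yA
    using finB finS lam_mono C_convex C_deriv c_cont welfare_max_imp_min_cost_flow[OF wmax] run
    by unfold_locales auto
  have "p1 \<in> {pstar t..f t}" "p2 \<in> {pstar t..f t}"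
    using act1 act2 unfolding active_items by auto
  from monotone_onD[OF marginal_cost_antimono[OF tS] this] p12 show ?thesis
    by simp
qed

end
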